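(* Assume $\hat w=\sup_xw(x)<\infty$. Let $\lambda\ge1$ and $z_1\in\mathbb{S}$. Then $0<w(z_1)\frac{w(z_1)+2\lfloor\lambda\rfloor-\lambda}{(w(z_1)+\lfloor\lambda\rfloor)(w(z_1)+\lfloor\lambda\rfloor-1)}\le\epsilon(\lambda,z_1)\le\frac{2\hat w}{2\hat w+\lambda-1}$, and $\frac1\lambda\le b(\lambda)\le\epsilon(\lambda)\le\frac{2\hat w}{2\hat w+\lambda-1}$, where $b(\lambda)=\frac1{\lfloor\lambda\rfloor}-\frac{\lambda-\lfloor\lambda\rfloor}{(\lfloor\lambda\rfloor+1)\lfloor\lambda\rfloor}$. Moreover, for $\lambda>1$, $1<\frac{\lfloor\lambda\rfloor^2+3\lfloor\lambda\rfloor-\lambda+1}{\lfloor\lambda\rfloor^2-\lfloor\lambda\rfloor+\lambda-1}\le\frac{1+\epsilon(\lambda)}{1-\epsilon(\lambda)}\le\frac{4\hat w+\lambda-1}{\lambda-1}$.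
   Context: Let $\pi,q$ be probability densities with respect to a $\sigma$-finite measure $\mu$ on $\mathbb{X}$ with $q>0$ wherever $\pi>0$; $\pi(dx)=\pi(x)\mu(dx)$, $q(dx)=q(x)\mu(dx)$, $\mathbb{S}=\{\pi>0\}$, $w=\pi/q$ on $\mathbb{S}$ and $0$ elsewhere. For integer $N\ge1$ and $z_1\in\mathbb{S}$, $\epsilon(N,z_1)=\int_{\mathbb{X}^{N-1}}\frac{w(z_1)}{\sum_{i=1}^Nw(z_i)}\prod_{n=2}^Nq(dz_n)$ and $\epsilon(N)=\int_{\mathbb{S}}\epsilon(N,z)\pi(dz)$; for real $\lambda\ge1$ with $\beta=\lfloor\lambda\rfloor+1-\lambda$, $\epsilon(\lambda,x)=\beta\epsilon(\lfloor\lambda\rfloor,x)+(1-\beta)\epsilon(\lfloor\lambda\rfloor+1,x)$ and $\epsilon(\lambda)=\beta\epsilon(\lfloor\lambda\rfloor)+(1-\beta)\epsilon(\lfloor\lambda\rfloor+1)$. *)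

theory Defs
  imports "HOL-Probability.Probability"
begin

definition iw :: "('a \<Rightarrow> real) \<Rightarrow> ('a \<Rightarrow> real) \<Rightarrow> 'a \<Rightarrow> real" where
  "iw p q x = (if p x > 0 then p x / q x else 0)"

text \<open>epsilon(N, z1): integral over z_2..z_N drawn iid from q(dz) = q(z) mu(dz).\<close>
definition epsN :: "'a measure \<Rightarrow> ('a \<Rightarrow> real) \<Rightarrow> ('a \<Rightarrow> real) \<Rightarrow> nat \<Rightarrow> 'a \<Rightarrow> real" where
  "epsN M p q N z1 =
     (\<integral>zs. iw p q z1 / (iw p q z1 + (\<Sum>i\<in>{2..N}. iw p q (zs i)))
        \<partial>(PiM {2..N} (\<lambda>_. density M (\<lambda>x. ennreal (q x)))))"

definition epsN_avg :: "'a measure \<Rightarrow> ('a \<Rightarrow> real) \<Rightarrow> ('a \<Rightarrow> real) \<Rightarrow> nat \<Rightarrow> real" where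
  "epsN_avg M p q N =
     (LINT z:{x\<in>space M. p x > 0}|density M (\<lambda>x. ennreal (p x)). epsN M p q N z)"

definition epsL :: "'a measure \<Rightarrow> ('a \<Rightarrow> real) \<Rightarrow> ('a \<Rightarrow> real) \<Rightarrow> real \<Rightarrow> 'a \<Rightarrow> real" where
  "epsL M p q lam z =
     (let n = nat \<lfloor>lam\<rfloor>; \<beta> = real n + 1 - lam
      in \<beta> * epsN M p q n z + (1 - \<beta>) * epsN M p q (n + 1) z)"

definition epsL_avg :: "'a measure \<Rightarrow> ('a \<Rightarrow> real) \<Rightarrow> ('a \<Rightarrow> real) \<Rightarrow> real \<Rightarrow> real" where
  "epsL_avg M p q lam =
     (let n = nat \<lfloor>lam\<rfloor>; \<beta> = real n + 1 - lam
      in \<beta> * epsN_avg M p q n + (1 - \<beta>) * epsN_avg M p q (n + 1))"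

definition blam :: "real \<Rightarrow> real" where
  "blam lam = 1 / real (nat \<lfloor>lam\<rfloor>)
     - (lam - real (nat \<lfloor>lam\<rfloor>)) / ((real (nat \<lfloor>lam\<rfloor>) + 1) * real (nat \<lfloor>lam\<rfloor>))"

end

theory Submission
  imports Defs
begin

(* eps(N, z) is the expectation of c / (c + S), where c = w(z) and S is a sum of N - 1 i.i.d.
   weights w(z_n), z_n ~ q, with mean 1 and second moment at most w_hat.  Since s \<mapsto> c / (c + s)
   is convex, its tangent at s = E S gives eps(N, z) \<ge> c / (c + N - 1).  From above, c \<le> w_hat
   gives c / (c + s) \<le> w_hat / (w_hat + s), which lies below the parabola through (0, 1) touching
   it at s = t; so eps(N, z) is bounded by the first two moments of S, and the choice
   t = lam - 1 + w_hat makes the interpolated bound equal 2 w_hat / (2 w_hat + lam - 1).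
   On average, eps(N) \<ge> E_q [w^2 / (w + N - 1)] \<ge> 1 / N, again by a tangent line, now of the
   convex map w \<mapsto> w^2 / (w + N - 1) at E_q w = 1.  The bounds on (1 + eps) / (1 - eps) follow
   since x \<mapsto> (1 + x) / (1 - x) is increasing on x < 1. *)

section \<open>Elementary inequalities\<close>

lemma div_add_ge_tangent:
  fixes c m s :: real
  assumes "0 < c" "0 \<le> m" "0 \<le> s"
  shows "c / (c + m) - c / (c + m)\<^sup>2 * (s - m) \<le> c / (c + s)"
proof -
  have "c / (c + s) - (c / (c + m) - c / (c + m)\<^sup>2 * (s - m))
      = c * (s - m)\<^sup>2 / ((c + s) * (c + m)\<^sup>2)"
  proof -
    have "c + m \<noteq> 0" "c + s \<noteq> 0" using assms by auto
    then show ?thesis by (simp add: divide_simps) algebra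
  qed
  also have "\<dots> \<ge> 0" using assms by simp
  finally show ?thesis by simp
qed

lemma div_add_le_quadratic:
  fixes a c s t :: real
  assumes "0 < c" "c \<le> a" "0 \<le> s" "0 \<le> t"
  shows "c / (c + s) \<le> 1 - (a + 2 * t) / (a + t)\<^sup>2 * s + s\<^sup>2 / (a + t)\<^sup>2"
proof -
  have "c / (c + s) \<le> a / (a + s)"
    using assms by (simp add: field_simps mult_right_mono)
  moreover have "1 - (a + 2 * t) / (a + t)\<^sup>2 * s + s\<^sup>2 / (a + t)\<^sup>2 - a / (a + s)
      = s * (s - t)\<^sup>2 / ((a + t)\<^sup>2 * (a + s))"
  proof -
    have "a + t \<noteq> 0" "a + s \<noteq> 0" using assms by auto
    then show ?thesis by (simp add: divide_simps) algebra
  qed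
  moreover have "s * (s - t)\<^sup>2 / ((a + t)\<^sup>2 * (a + s)) \<ge> 0"
    using assms by simp
  ultimately show ?thesis by linarith
qed

lemma sq_div_add_ge_tangent:
  fixes m s u :: real
  assumes "0 \<le> m" "0 \<le> s" "0 \<le> u"
  shows "u\<^sup>2 / (u + m) + (u\<^sup>2 + 2 * m * u) / (u + m)\<^sup>2 * (s - u) \<le> s\<^sup>2 / (s + m)"
proof (cases "m = 0")
  case True
  then show ?thesis using assms by (cases "u = 0") (simp_all add: power2_eq_square)
next
  case False
  then have "s\<^sup>2 / (s + m) - (u\<^sup>2 / (u + m) + (u\<^sup>2 + 2 * m * u) / (u + m)\<^sup>2 * (s - u))
      = m\<^sup>2 * (s - u)\<^sup>2 / ((s + m) * (u + m)\<^sup>2)"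
  proof -
    have "s + m \<noteq> 0" "u + m \<noteq> 0" using assms False by auto
    then show ?thesis by (simp add: divide_simps) algebra
  qed
  also have "\<dots> \<ge> 0" using assms by simp
  finally show ?thesis by simp
qed

lemma power2_sum_split:
  fixes g :: "'i \<Rightarrow> 'b::comm_ring_1"
  assumes "finite I"
  shows "(\<Sum>i\<in>I. g i)\<^sup>2 = (\<Sum>i\<in>I. (g i)\<^sup>2) + (\<Sum>i\<in>I. \<Sum>j\<in>I - {i}. g i * g j)"
proof -
  have "(\<Sum>i\<in>I. g i)\<^sup>2 = (\<Sum>i\<in>I. \<Sum>j\<in>I. g i * g j)"
    by (simp add: power2_eq_square sum_product)
  also have "\<dots> = (\<Sum>i\<in>I. (g i)\<^sup>2 + (\<Sum>j\<in>I - {i}. g i * g j))"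
    using assms by (intro sum.cong refl) (simp add: sum.remove power2_eq_square)
  finally show ?thesis by (simp add: sum.distrib)
qed

section \<open>Interpolation in \<open>lam\<close>\<close>

lemma convex_combination_mono:
  fixes \<beta> x x' y y' :: real
  assumes "0 \<le> \<beta>" "\<beta> \<le> 1" "x \<le> x'" "y \<le> y'"
  shows "\<beta> * x + (1 - \<beta>) * y \<le> \<beta> * x' + (1 - \<beta>) * y'"
  using assms by (intro add_mono mult_left_mono) auto

lemma nat_floor_bounds:
  fixes lam :: real
  assumes "1 \<le> lam"
  shows "1 \<le> nat \<lfloor>lam\<rfloor>" and "real (nat \<lfloor>lam\<rfloor>) \<le> lam"
    and "lam < real (nat \<lfloor>lam\<rfloor>) + 1"
  using assms by linarith+

lemma interpolate_div_add:
  fixes w n lam :: real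
  assumes "0 < w" "1 \<le> n"
  shows "(n + 1 - lam) * (w / (w + (n - 1))) + (1 - (n + 1 - lam)) * (w / (w + n))
    = w * (w + 2 * n - lam) / ((w + n) * (w + n - 1))"
proof -
  have "w + (n - 1) \<noteq> 0" "w + n \<noteq> 0" "w + n - 1 \<noteq> 0" using assms by auto
  then show ?thesis by (simp add: field_simps)
qed

lemma interpolate_quadratic_bound_le:
  fixes a n lam :: real
  assumes a: "0 < a" and n: "1 \<le> n" "n \<le> lam" "lam < n + 1"
  defines "t \<equiv> lam - 1 + a"
  shows "(n + 1 - lam) * (1 - (a + 2 * t) / (a + t)\<^sup>2 * (n - 1) + (n - 1) * (n - 2 + a) / (a + t)\<^sup>2)
      + (1 - (n + 1 - lam)) * (1 - (a + 2 * t) / (a + t)\<^sup>2 * n + n * (n - 1 + a) / (a + t)\<^sup>2)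
    \<le> 2 * a / (2 * a + lam - 1)"
proof -
  define m where "m = lam - 1"
  define b where "b = n + 1 - lam"
  define G where "G = 1 / (a + t)\<^sup>2"
  have m: "0 \<le> m" using n by (simp add: m_def)
  have div_G: "x / (a + t)\<^sup>2 = x * G" for x by (simp add: G_def)
  have "(n + 1 - lam) * (1 - (a + 2 * t) / (a + t)\<^sup>2 * (n - 1) + (n - 1) * (n - 2 + a) / (a + t)\<^sup>2)
      + (1 - (n + 1 - lam)) * (1 - (a + 2 * t) / (a + t)\<^sup>2 * n + n * (n - 1 + a) / (a + t)\<^sup>2)
    = 1 - (3 * a + 2 * m) * m * G + (m\<^sup>2 + m * (a - 1) + b * (1 - b)) * G"
    unfolding div_G by (simp add: t_def m_def b_def power2_eq_square algebra_simps)
  also have "\<dots> \<le> 1 - (3 * a + 2 * m) * m * G + (m\<^sup>2 + m * (a - 1) + m) * G"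
  proof -
    have "b * (1 - b) \<le> 1 * (1 - b)" using n by (intro mult_right_mono) (auto simp: b_def)
    then have "b * (1 - b) \<le> m" using n by (simp add: b_def m_def)
    then show ?thesis by (simp add: G_def divide_right_mono)
  qed
  also have "\<dots> = 2 * a / (2 * a + m)"
  proof -
    have "a + t = 2 * a + m" "2 * a + m \<noteq> 0" using a m by (simp_all add: t_def m_def)
    then show ?thesis by (simp add: G_def divide_simps power2_eq_square) (simp add: algebra_simps)
  qed
  finally show ?thesis by (simp add: m_def add_diff_eq)
qed

lemma blam_eq_interpolation:
  fixes lam :: real
  assumes "1 \<le> lam"
  defines "n \<equiv> real (nat \<lfloor>lam\<rfloor>)"
  shows "blam lam = (n + 1 - lam) * (1 / n) + (1 - (n + 1 - lam)) * (1 / (n + 1))"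
proof -
  have "n \<noteq> 0" "n + 1 \<noteq> 0" using nat_floor_bounds[OF assms(1)] by (auto simp: n_def)
  then show ?thesis by (simp add: blam_def n_def[symmetric] divide_simps) (simp add: algebra_simps)
qed

lemma blam_eq:
  fixes lam :: real
  assumes "1 \<le> lam"
  defines "n \<equiv> real (nat \<lfloor>lam\<rfloor>)"
  shows "blam lam = (2 * n + 1 - lam) / (n * (n + 1))"
proof -
  have "n \<noteq> 0" "n + 1 \<noteq> 0" using nat_floor_bounds[OF assms(1)] by (auto simp: n_def)
  then show ?thesis by (simp add: blam_def n_def[symmetric] divide_simps)
qed

lemma inverse_le_blam:
  fixes lam :: real
  assumes "1 \<le> lam"
  shows "1 / lam \<le> blam lam"
proof -
  define n where "n = real (nat \<lfloor>lam\<rfloor>)"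
  have n: "1 \<le> n" "n \<le> lam" "lam < n + 1" using nat_floor_bounds[OF assms] by (simp_all add: n_def)
  have "n * (n + 1) \<le> (2 * n + 1 - lam) * lam"
    using mult_nonneg_nonneg[of "lam - n" "n + 1 - lam"] n by (simp add: algebra_simps)
  moreover have "0 < n * (n + 1)" "0 < lam" using n by simp_all
  ultimately show ?thesis
    by (simp add: blam_eq[OF assms] n_def[symmetric] divide_simps mult.commute)
qed

lemma ratio_mono:
  fixes x y :: real
  assumes "x \<le> y" "y < 1"
  shows "(1 + x) / (1 - x) \<le> (1 + y) / (1 - y)"
  using assms by (simp add: field_simps)

lemma ratio_bounds:
  fixes a e lam :: real
  assumes a: "0 < a" and lam: "1 < lam" and e: "blam lam \<le> e" "e \<le> 2 * a / (2 * a + lam - 1)"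
  defines "n \<equiv> real (nat \<lfloor>lam\<rfloor>)"
  shows "1 < (n\<^sup>2 + 3 * n - lam + 1) / (n\<^sup>2 - n + lam - 1)"
    and "(n\<^sup>2 + 3 * n - lam + 1) / (n\<^sup>2 - n + lam - 1) \<le> (1 + e) / (1 - e)"
    and "(1 + e) / (1 - e) \<le> (4 * a + lam - 1) / (lam - 1)"
proof -
  have n: "1 \<le> n" "n \<le> lam" "lam < n + 1" using nat_floor_bounds[of lam] lam by (simp_all add: n_def)
  have "1 * n \<le> n * n" using n by (intro mult_right_mono) auto
  then have den: "0 < n\<^sup>2 - n + lam - 1"
    using lam by (simp add: power2_eq_square)
  show "1 < (n\<^sup>2 + 3 * n - lam + 1) / (n\<^sup>2 - n + lam - 1)"
    using den n by (simp add: field_simps)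
  define f where "f = 2 * a / (2 * a + lam - 1)"
  have f1: "f < 1" using a lam by (simp add: f_def)
  have d: "0 < n * (n + 1)" using n by simp
  have "1 + blam lam = (n\<^sup>2 + 3 * n - lam + 1) / (n * (n + 1))"
    and "1 - blam lam = (n\<^sup>2 - n + lam - 1) / (n * (n + 1))"
    using d lam by (simp_all add: blam_eq n_def[symmetric] divide_simps power2_eq_square algebra_simps)
  then have "(1 + blam lam) / (1 - blam lam) = (n\<^sup>2 + 3 * n - lam + 1) / (n\<^sup>2 - n + lam - 1)"
    using n by auto
  then show "(n\<^sup>2 + 3 * n - lam + 1) / (n\<^sup>2 - n + lam - 1) \<le> (1 + e) / (1 - e)"
    using ratio_mono[OF e(1)] e(2) f1 by (simp add: f_def)
  have "1 + f = (4 * a + lam - 1) / (2 * a + lam - 1)" "1 - f = (lam - 1) / (2 * a + lam - 1)"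
    using a lam by (simp_all add: f_def field_simps)
  then have "(1 + f) / (1 - f) = (4 * a + lam - 1) / (lam - 1)"
    using a lam by simp
  then show "(1 + e) / (1 - e) \<le> (4 * a + lam - 1) / (lam - 1)"
    using ratio_mono[OF e(2)[folded f_def] f1] by simp
qed

lemma interpolate_div_add_pos:
  fixes w lam :: real
  assumes "0 < w" "1 \<le> lam"
  defines "n \<equiv> real (nat \<lfloor>lam\<rfloor>)"
  shows "0 < w * (w + 2 * n - lam) / ((w + n) * (w + n - 1))"
proof -
  have "1 \<le> n" "n \<le> lam" "lam < n + 1"
    using nat_floor_bounds[OF assms(2)] by (simp_all add: n_def)
  then show ?thesis using assms(1) by (intro divide_pos_pos mult_pos_pos) auto
qed

lemma floor_interpolation_le_of_quadratic_bound:
  fixes a lam :: real and e :: "nat \<Rightarrow> real"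
  assumes "0 < a" "1 \<le> lam"
  defines "t \<equiv> lam - 1 + a"
  assumes e: "\<And>k. 1 \<le> k \<Longrightarrow> e k \<le> 1 - (a + 2 * t) / (a + t)\<^sup>2 * (real k - 1)
    + (real k - 1) * (real k - 2 + a) / (a + t)\<^sup>2"
  shows "(real (nat \<lfloor>lam\<rfloor>) + 1 - lam) * e (nat \<lfloor>lam\<rfloor>)
      + (1 - (real (nat \<lfloor>lam\<rfloor>) + 1 - lam)) * e (nat \<lfloor>lam\<rfloor> + 1)
    \<le> 2 * a / (2 * a + lam - 1)"
proof -
  define N where "N = nat \<lfloor>lam\<rfloor>"
  have N: "1 \<le> real N" "real N \<le> lam" "lam < real N + 1"
    using nat_floor_bounds[OF assms(2)] by (simp_all add: N_def)
  have "(real N + 1 - lam) * e N + (1 - (real N + 1 - lam)) * e (N + 1)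
      \<le> (real N + 1 - lam) * (1 - (a + 2 * t) / (a + t)\<^sup>2 * (real N - 1)
          + (real N - 1) * (real N - 2 + a) / (a + t)\<^sup>2)
        + (1 - (real N + 1 - lam)) * (1 - (a + 2 * t) / (a + t)\<^sup>2 * real N
          + real N * (real N - 1 + a) / (a + t)\<^sup>2)"
    using N e[of N] e[of "N + 1"] by (intro convex_combination_mono) (auto simp: algebra_simps)
  also have "\<dots> \<le> 2 * a / (2 * a + lam - 1)"
    using interpolate_quadratic_bound_le[OF assms(1) N]
    by (simp add: t_def)
  finally show ?thesis by (simp add: N_def)
qed

section \<open>Moments of sums of i.i.d. variables\<close>

context prob_space
begin

lemma product_sigma_finite_iid: "product_sigma_finite (\<lambda>_. M)"
  by (simp add: product_sigma_finite_def sigma_finite_measure_axioms)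

lemma prob_space_PiM_iid: "prob_space (PiM I (\<lambda>_. M))"
  by (simp add: prob_space_PiM prob_space_axioms)

lemma integrable_PiM_component_iff:
  fixes f :: "'a \<Rightarrow> real"
  assumes "i \<in> I" "f \<in> borel_measurable M"
  shows "integrable (PiM I (\<lambda>_. M)) (\<lambda>x. f (x i)) \<longleftrightarrow> integrable M f"
  using integrable_distr_eq[of "\<lambda>x. x i" "PiM I (\<lambda>_. M)" M f]
  using distr_PiM_component[of I "\<lambda>_. M" i] assms by (simp add: prob_space_axioms)

lemma integral_PiM_component:
  fixes f :: "'a \<Rightarrow> real"
  assumes "i \<in> I" "f \<in> borel_measurable M"
  shows "(\<integral>x. f (x i) \<partial>PiM I (\<lambda>_. M)) = expectation f"
  using integral_distr[of "\<lambda>x. x i" "PiM I (\<lambda>_. M)" M f]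
  using distr_PiM_component[of I "\<lambda>_. M" i] assms by (simp add: prob_space_axioms)

lemma integral_PiM_two_components:
  fixes f :: "'a \<Rightarrow> real"
  assumes "finite I" "i \<in> I" "j \<in> I" "i \<noteq> j" "integrable M f"
  shows "integrable (PiM I (\<lambda>_. M)) (\<lambda>x. f (x i) * f (x j))"
    and "(\<integral>x. f (x i) * f (x j) \<partial>PiM I (\<lambda>_. M)) = (expectation f)\<^sup>2"
proof -
  interpret product_sigma_finite "\<lambda>_. M" by (rule product_sigma_finite_iid)
  define g where "g l = (if l = i \<or> l = j then f else (\<lambda>_. 1))" for l
  have g_int: "integrable M (g l)" for l
    using assms(5) by (simp add: g_def)
  have prod_g: "(\<Prod>l\<in>I. g l (x l)) = f (x i) * f (x j)" for x
  proof -
    have "(\<Prod>l\<in>I. g l (x l)) = (\<Prod>l\<in>{i, j}. f (x l))"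
      using assms(1-3) by (intro prod.mono_neutral_cong_right) (auto simp: g_def)
    then show ?thesis using assms(4) by simp
  qed
  have "(\<Prod>l\<in>I. integral\<^sup>L M (g l)) = (\<Prod>l\<in>{i, j}. expectation f)"
    using assms(1-3) prob_space by (intro prod.mono_neutral_cong_right) (auto simp: g_def)
  then show "(\<integral>x. f (x i) * f (x j) \<partial>PiM I (\<lambda>_. M)) = (expectation f)\<^sup>2"
    using product_integral_prod[OF assms(1), of g] g_int assms(4)
    by (simp add: prod_g power2_eq_square)
  show "integrable (PiM I (\<lambda>_. M)) (\<lambda>x. f (x i) * f (x j))"
    using product_integrable_prod[OF assms(1), of g] g_int by (simp add: prod_g)
qed

lemma integral_PiM_sum:
  fixes f :: "'a \<Rightarrow> real"
  assumes "finite I" "integrable M f"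
  shows "integrable (PiM I (\<lambda>_. M)) (\<lambda>x. \<Sum>i\<in>I. f (x i))"
    and "(\<integral>x. (\<Sum>i\<in>I. f (x i)) \<partial>PiM I (\<lambda>_. M)) = card I * expectation f"
  using assms by (simp_all add: integrable_PiM_component_iff integral_PiM_component)

lemma integral_PiM_cross_sum:
  fixes f :: "'a \<Rightarrow> real"
  assumes I: "finite I" and f: "integrable M f"
  shows "integrable (PiM I (\<lambda>_. M)) (\<lambda>x. \<Sum>i\<in>I. \<Sum>j\<in>I - {i}. f (x i) * f (x j))"
    and "(\<integral>x. (\<Sum>i\<in>I. \<Sum>j\<in>I - {i}. f (x i) * f (x j)) \<partial>PiM I (\<lambda>_. M))
      = card I * (real (card I) - 1) * (expectation f)\<^sup>2"
proof -
  let ?P = "PiM I (\<lambda>_. M)"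
  note cross = integral_PiM_two_components[OF I _ _ _ f]
  show "integrable ?P (\<lambda>x. \<Sum>i\<in>I. \<Sum>j\<in>I - {i}. f (x i) * f (x j))"
    using cross(1) by (intro Bochner_Integration.integrable_sum) auto
  have "(\<integral>x. (\<Sum>i\<in>I. \<Sum>j\<in>I - {i}. f (x i) * f (x j)) \<partial>?P)
      = (\<Sum>i\<in>I. \<integral>x. (\<Sum>j\<in>I - {i}. f (x i) * f (x j)) \<partial>?P)"
    using cross(1)
    by (intro Bochner_Integration.integral_sum Bochner_Integration.integrable_sum) auto
  also have "\<dots> = (\<Sum>i\<in>I. \<Sum>j\<in>I - {i}. \<integral>x. f (x i) * f (x j) \<partial>?P)"
    using cross(1) by (intro sum.cong refl Bochner_Integration.integral_sum) auto
  also have "\<dots> = (\<Sum>i\<in>I. \<Sum>j\<in>I - {i}. (expectation f)\<^sup>2)"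
    using cross(2) by (intro sum.cong refl) auto
  also have "\<dots> = card I * (real (card I) - 1) * (expectation f)\<^sup>2"
  proof (cases "I = {}")
    case False
    then have "1 \<le> card I" using I by (simp add: Suc_le_eq card_gt_0_iff)
    then show ?thesis using I by (simp add: card_Diff_singleton of_nat_diff)
  qed simp
  finally show "(\<integral>x. (\<Sum>i\<in>I. \<Sum>j\<in>I - {i}. f (x i) * f (x j)) \<partial>?P)
      = card I * (real (card I) - 1) * (expectation f)\<^sup>2" .
qed

lemma integral_PiM_sum_square:
  fixes f :: "'a \<Rightarrow> real"
  assumes I: "finite I" and f: "integrable M f" and f2: "integrable M (\<lambda>x. (f x)\<^sup>2)"
  shows "integrable (PiM I (\<lambda>_. M)) (\<lambda>x. (\<Sum>i\<in>I. f (x i))\<^sup>2)"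
    and "(\<integral>x. (\<Sum>i\<in>I. f (x i))\<^sup>2 \<partial>PiM I (\<lambda>_. M))
      = card I * expectation (\<lambda>x. (f x)\<^sup>2) + card I * (real (card I) - 1) * (expectation f)\<^sup>2"
  unfolding power2_sum_split[OF I]
  using integral_PiM_sum[OF I f2] integral_PiM_cross_sum[OF I f]
  by (simp_all add: Bochner_Integration.integral_add)

lemma integrable_div_add:
  fixes X :: "'a \<Rightarrow> real"
  assumes "0 \<le> c" "X \<in> borel_measurable M" "\<And>x. x \<in> space M \<Longrightarrow> 0 \<le> X x"
  shows "integrable M (\<lambda>x. c / (c + X x))"
proof (rule integrable_const_bound[where B = 1])
  have "\<bar>c / (c + X x)\<bar> \<le> 1" if "x \<in> space M" for x
    using assms(1) assms(3)[OF that] by (simp add: divide_le_eq_1) arith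
  then show "AE x in M. norm (c / (c + X x)) \<le> 1"
    by (intro AE_I2) simp
qed (use assms(2) in measurable)

lemma expectation_div_add_ge:
  fixes X :: "'a \<Rightarrow> real"
  assumes c: "0 < c" and X: "integrable M X" "\<And>x. x \<in> space M \<Longrightarrow> 0 \<le> X x"
  shows "c / (c + expectation X) \<le> expectation (\<lambda>x. c / (c + X x))"
proof -
  let ?\<mu> = "expectation X"
  have \<mu>: "0 \<le> ?\<mu>" using X by (intro integral_nonneg_AE AE_I2) auto
  have "c / (c + ?\<mu>) = expectation (\<lambda>x. c / (c + ?\<mu>) - c / (c + ?\<mu>)\<^sup>2 * (X x - ?\<mu>))"
    using X prob_space by (simp add: algebra_simps)
  also have "\<dots> \<le> expectation (\<lambda>x. c / (c + X x))"
    using c \<mu> X by (intro integral_mono integrable_div_add div_add_ge_tangent) auto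
  finally show ?thesis .
qed

lemma expectation_div_add_le:
  fixes X :: "'a \<Rightarrow> real"
  assumes "0 < c" "c \<le> a" "0 \<le> t"
    and X: "integrable M X" "integrable M (\<lambda>x. (X x)\<^sup>2)" "\<And>x. x \<in> space M \<Longrightarrow> 0 \<le> X x"
  shows "expectation (\<lambda>x. c / (c + X x))
    \<le> 1 - (a + 2 * t) / (a + t)\<^sup>2 * expectation X + expectation (\<lambda>x. (X x)\<^sup>2) / (a + t)\<^sup>2"
proof -
  have "expectation (\<lambda>x. c / (c + X x))
      \<le> expectation (\<lambda>x. 1 - (a + 2 * t) / (a + t)\<^sup>2 * X x + (X x)\<^sup>2 / (a + t)\<^sup>2)"
    using assms by (intro integral_mono integrable_div_add div_add_le_quadratic) auto
  also have "\<dots>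
      = 1 - (a + 2 * t) / (a + t)\<^sup>2 * expectation X + expectation (\<lambda>x. (X x)\<^sup>2) / (a + t)\<^sup>2"
    using X prob_space by simp
  finally show ?thesis .
qed

lemma expectation_sq_div_add_ge:
  fixes X :: "'a \<Rightarrow> real"
  assumes m: "0 \<le> m" and X: "integrable M X" "\<And>x. x \<in> space M \<Longrightarrow> 0 \<le> X x"
  shows "(expectation X)\<^sup>2 / (expectation X + m) \<le> expectation (\<lambda>x. (X x)\<^sup>2 / (X x + m))"
proof -
  let ?\<mu> = "expectation X"
  have \<mu>: "0 \<le> ?\<mu>" using X by (intro integral_nonneg_AE AE_I2) auto
  have int: "integrable M (\<lambda>x. (X x)\<^sup>2 / (X x + m))"
  proof (rule Bochner_Integration.integrable_bound[OF X(1)])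
    have "norm ((X x)\<^sup>2 / (X x + m)) \<le> norm (X x)" if "x \<in> space M" for x
      using m X(2)[OF that] by (simp add: power2_eq_square divide_le_eq mult_left_mono)
    then show "AE x in M. norm ((X x)\<^sup>2 / (X x + m)) \<le> norm (X x)"
      by (intro AE_I2)
  qed (use X(1) in measurable)
  have "?\<mu>\<^sup>2 / (?\<mu> + m)
      = expectation (\<lambda>x. ?\<mu>\<^sup>2 / (?\<mu> + m)
          + (?\<mu>\<^sup>2 + 2 * m * ?\<mu>) / (?\<mu> + m)\<^sup>2 * (X x - ?\<mu>))"
    using X prob_space by (simp add: algebra_simps)
  also have "\<dots> \<le> expectation (\<lambda>x. (X x)\<^sup>2 / (X x + m))"
    using m \<mu> X by (intro integral_mono int sq_div_add_ge_tangent) auto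
  finally show ?thesis .
qed

end

section \<open>Importance weights\<close>

locale importance_sampling =
  fixes M :: "'a measure" and p q :: "'a \<Rightarrow> real"
  assumes p_measurable[measurable]: "p \<in> borel_measurable M"
    and q_measurable[measurable]: "q \<in> borel_measurable M"
    and p_nonneg: "\<And>x. x \<in> space M \<Longrightarrow> 0 \<le> p x"
    and q_nonneg: "\<And>x. x \<in> space M \<Longrightarrow> 0 \<le> q x"
    and nn_integral_p: "(\<integral>\<^sup>+x. ennreal (p x) \<partial>M) = 1"
    and nn_integral_q: "(\<integral>\<^sup>+x. ennreal (q x) \<partial>M) = 1"
    and q_pos: "\<And>x. x \<in> space M \<Longrightarrow> 0 < p x \<Longrightarrow> 0 < q x"
    and bdd_above_iw: "bdd_above (iw p q ` space M)"
begin

abbreviation Q :: "'a measure" where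
  "Q \<equiv> density M (\<lambda>x. ennreal (q x))"

abbreviation iw_sup :: real where
  "iw_sup \<equiv> SUP x\<in>space M. iw p q x"

sublocale Q: prob_space Q
  by (rule prob_spaceI) (auto simp: emeasure_density nn_integral_q cong: nn_integral_cong)

lemma iw_measurable[measurable]: "iw p q \<in> borel_measurable M"
  unfolding iw_def by measurable

lemma iw_nonneg: "x \<in> space M \<Longrightarrow> 0 \<le> iw p q x"
  using p_nonneg q_nonneg by (simp add: iw_def)

lemma iw_pos: "x \<in> space M \<Longrightarrow> 0 < p x \<Longrightarrow> 0 < iw p q x"
  using q_pos by (simp add: iw_def)

lemma iw_le_sup: "x \<in> space M \<Longrightarrow> iw p q x \<le> iw_sup"
  using bdd_above_iw by (intro cSUP_upper) auto

lemma p_eq_q_mult_iw: "x \<in> space M \<Longrightarrow> p x = q x * iw p q x"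
  using p_nonneg[of x] q_pos[of x] by (cases "0 < p x") (auto simp: iw_def)

lemma integrable_p: "integrable M p"
  using nn_integral_p p_nonneg by (intro integrableI_nonneg) (auto simp: AE_I2)

lemma integral_p: "integral\<^sup>L M p = 1"
  using nn_integral_p p_nonneg by (subst integral_eq_nn_integral) (auto simp: AE_I2)

lemma iw_sup_pos: "0 < iw_sup"
proof -
  obtain x where x: "x \<in> space M" "0 < p x"
  proof (rule ccontr)
    assume "\<not> thesis"
    with that have "\<And>x. x \<in> space M \<Longrightarrow> p x = 0" using p_nonneg by force
    then have "integral\<^sup>L M p = 0" by (simp cong: Bochner_Integration.integral_cong)
    with integral_p show False by simp
  qed
  then show ?thesis using iw_pos iw_le_sup by fastforce
qed

lemma integral_Q: "f \<in> borel_measurable M \<Longrightarrow> integral\<^sup>L Q f = (\<integral>x. q x * f x \<partial>M)"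
  using q_nonneg by (subst integral_density) (auto intro: AE_I2)

lemma integrable_Q_iw: "integrable Q (iw p q)"
  using iw_nonneg iw_le_sup by (intro Q.integrable_const_bound[where B = iw_sup] AE_I2) auto

lemma integrable_Q_iw_sq: "integrable Q (\<lambda>x. (iw p q x)\<^sup>2)"
  using iw_nonneg iw_le_sup
  by (intro Q.integrable_const_bound[where B = "iw_sup\<^sup>2"] AE_I2) (auto intro: power_mono)

lemma expectation_iw: "Q.expectation (iw p q) = 1"
proof -
  have "Q.expectation (iw p q) = integral\<^sup>L M p"
    by (simp add: integral_Q p_eq_q_mult_iw cong: Bochner_Integration.integral_cong)
  then show ?thesis using integral_p by simp
qed

lemma expectation_iw_sq_le: "Q.expectation (\<lambda>x. (iw p q x)\<^sup>2) \<le> iw_sup"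
proof -
  have "Q.expectation (\<lambda>x. (iw p q x)\<^sup>2) \<le> Q.expectation (\<lambda>x. iw_sup * iw p q x)"
    using integrable_Q_iw integrable_Q_iw_sq iw_nonneg iw_le_sup
    by (intro integral_mono) (auto simp: power2_eq_square intro: mult_right_mono)
  then show ?thesis using expectation_iw by simp
qed

lemma weight_sum_moments:
  assumes "finite I"
  defines "P \<equiv> PiM I (\<lambda>_. Q)"
  shows "integrable P (\<lambda>zs. \<Sum>i\<in>I. iw p q (zs i))"
    and "(\<integral>zs. (\<Sum>i\<in>I. iw p q (zs i)) \<partial>P) = card I"
    and "integrable P (\<lambda>zs. (\<Sum>i\<in>I. iw p q (zs i))\<^sup>2)"
    and "(\<integral>zs. (\<Sum>i\<in>I. iw p q (zs i))\<^sup>2 \<partial>P) \<le> card I * (real (card I) - 1 + iw_sup)"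
proof -
  show "integrable P (\<lambda>zs. \<Sum>i\<in>I. iw p q (zs i))"
    and "(\<integral>zs. (\<Sum>i\<in>I. iw p q (zs i)) \<partial>P) = card I"
    unfolding P_def using Q.integral_PiM_sum[OF assms(1) integrable_Q_iw] expectation_iw
    by simp_all
  show "integrable P (\<lambda>zs. (\<Sum>i\<in>I. iw p q (zs i))\<^sup>2)"
    unfolding P_def
    using Q.integral_PiM_sum_square(1)[OF assms(1) integrable_Q_iw integrable_Q_iw_sq] .
  have "(\<integral>zs. (\<Sum>i\<in>I. iw p q (zs i))\<^sup>2 \<partial>P)
      = card I * Q.expectation (\<lambda>x. (iw p q x)\<^sup>2) + card I * (real (card I) - 1)"
    unfolding P_def
    using Q.integral_PiM_sum_square(2)[OF assms(1) integrable_Q_iw integrable_Q_iw_sq]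
    by (simp add: expectation_iw)
  also have "\<dots> \<le> card I * (real (card I) - 1 + iw_sup)"
    using expectation_iw_sq_le by (simp add: algebra_simps mult_left_mono)
  finally show "(\<integral>zs. (\<Sum>i\<in>I. iw p q (zs i))\<^sup>2 \<partial>P)
      \<le> card I * (real (card I) - 1 + iw_sup)" .
qed

lemma weight_sum_nonneg: "zs \<in> space (PiM I (\<lambda>_. Q)) \<Longrightarrow> 0 \<le> (\<Sum>i\<in>I. iw p q (zs i))"
  by (intro sum_nonneg) (auto simp: space_PiM PiE_iff intro: iw_nonneg)

lemma integral_weight_sum_sample:
  "1 \<le> k \<Longrightarrow>
    (\<integral>zs. (\<Sum>i\<in>{2..k}. iw p q (zs i)) \<partial>PiM {2..k} (\<lambda>_. Q)) = real k - 1"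
  using weight_sum_moments(2)[of "{2..k}"] by (cases k) auto

lemma epsN_ge:
  assumes "1 \<le> k" "z \<in> space M" "0 < p z"
  shows "iw p q z / (iw p q z + (real k - 1)) \<le> epsN M p q k z"
  unfolding epsN_def integral_weight_sum_sample[OF assms(1), symmetric]
  by (rule prob_space.expectation_div_add_ge[OF Q.prob_space_PiM_iid iw_pos[OF assms(2,3)]
      weight_sum_moments(1) weight_sum_nonneg]) simp

lemma epsN_le:
  assumes "1 \<le> k" "z \<in> space M" "0 < p z" "0 \<le> t"
  shows "epsN M p q k z \<le> 1 - (iw_sup + 2 * t) / (iw_sup + t)\<^sup>2 * (real k - 1)
    + (real k - 1) * (real k - 2 + iw_sup) / (iw_sup + t)\<^sup>2"
proof -
  let ?P = "PiM {2..k} (\<lambda>_. Q)" and ?S = "\<lambda>zs. \<Sum>i\<in>{2..k}. iw p q (zs i)"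
  have "epsN M p q k z \<le> 1 - (iw_sup + 2 * t) / (iw_sup + t)\<^sup>2 * (\<integral>zs. ?S zs \<partial>?P)
      + (\<integral>zs. (?S zs)\<^sup>2 \<partial>?P) / (iw_sup + t)\<^sup>2"
    unfolding epsN_def
    using assms by (intro prob_space.expectation_div_add_le[OF Q.prob_space_PiM_iid]
        iw_pos iw_le_sup weight_sum_moments weight_sum_nonneg) auto
  also have "\<dots> \<le> 1 - (iw_sup + 2 * t) / (iw_sup + t)\<^sup>2 * (real k - 1)
      + (real k - 1) * (real k - 2 + iw_sup) / (iw_sup + t)\<^sup>2"
    using weight_sum_moments(4)[of "{2..k}"] assms(1)
    by (simp add: integral_weight_sum_sample of_nat_diff divide_right_mono)
  finally show ?thesis .
qed

lemma epsN_nonneg_le_one: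
  assumes "z \<in> space M"
  shows "0 \<le> epsN M p q k z" and "epsN M p q k z \<le> 1"
proof -
  interpret P: prob_space "PiM {2..k} (\<lambda>_. Q)" by (rule Q.prob_space_PiM_iid)
  have c: "0 \<le> iw p q z" using iw_nonneg[OF assms] .
  show "0 \<le> epsN M p q k z"
    unfolding epsN_def
    by (intro integral_nonneg_AE AE_I2 divide_nonneg_nonneg add_nonneg_nonneg c weight_sum_nonneg)
  show "epsN M p q k z \<le> 1"
    unfolding epsN_def using c weight_sum_nonneg
    by (intro P.integral_le_const P.integrable_div_add AE_I2) (auto simp: divide_le_eq_1)
qed

lemma epsN_measurable[measurable]: "(\<lambda>z. epsN M p q k z) \<in> borel_measurable M"
proof -
  interpret P: prob_space "PiM {2..k} (\<lambda>_. Q)" by (rule Q.prob_space_PiM_iid)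
  show ?thesis
    unfolding epsN_def by (rule P.borel_measurable_lebesgue_integral) measurable
qed

lemma epsN_avg_eq_integral: "epsN_avg M p q k = (\<integral>z. p z * epsN M p q k z \<partial>M)"
proof -
  have "epsN_avg M p q k = (\<integral>z. p z * (indicator {x \<in> space M. 0 < p x} z * epsN M p q k z) \<partial>M)"
    unfolding epsN_avg_def set_lebesgue_integral_def
    using p_nonneg by (subst integral_density) (auto intro: AE_I2)
  also have "\<dots> = (\<integral>z. p z * epsN M p q k z \<partial>M)"
    by (intro Bochner_Integration.integral_cong) (auto simp: indicator_def less_le p_nonneg)
  finally show ?thesis .
qed

lemma integrable_p_mult:
  assumes "f \<in> borel_measurable M" "\<And>z. z \<in> space M \<Longrightarrow> 0 \<le> f z \<and> f z \<le> 1"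
  shows "integrable M (\<lambda>z. p z * f z)"
proof (rule Bochner_Integration.integrable_bound[OF integrable_p])
  have "norm (p z * f z) \<le> norm (p z)" if "z \<in> space M" for z
    using assms(2)[OF that] p_nonneg[OF that] by (simp add: abs_mult mult_left_le)
  then show "AE z in M. norm (p z * f z) \<le> norm (p z)"
    by (intro AE_I2)
qed (use assms(1) in measurable)

lemma integrable_p_mult_epsN: "integrable M (\<lambda>z. p z * epsN M p q k z)"
  using epsN_nonneg_le_one by (intro integrable_p_mult) auto

lemma epsN_avg_le:
  assumes "\<And>z. z \<in> space M \<Longrightarrow> 0 < p z \<Longrightarrow> epsN M p q k z \<le> U"
  shows "epsN_avg M p q k \<le> U"
proof -
  have "epsN_avg M p q k \<le> (\<integral>z. U * p z \<partial>M)"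
    unfolding epsN_avg_eq_integral
  proof (intro integral_mono integrable_p_mult_epsN)
    show "integrable M (\<lambda>z. U * p z)" using integrable_p by simp
    show "p z * epsN M p q k z \<le> U * p z" if "z \<in> space M" for z
      using assms[OF that] p_nonneg[OF that] by (cases "0 < p z") (auto simp: mult.commute)
  qed
  then show ?thesis using integral_p by simp
qed

lemma epsN_avg_ge:
  assumes "1 \<le> k"
  shows "1 / real k \<le> epsN_avg M p q k"
proof -
  define m where "m = real k - 1"
  have m: "0 \<le> m" using assms by (simp add: m_def)
  have "1 / real k = (Q.expectation (iw p q))\<^sup>2 / (Q.expectation (iw p q) + m)"
    by (simp add: expectation_iw m_def)
  also have "\<dots> \<le> Q.expectation (\<lambda>x. (iw p q x)\<^sup>2 / (iw p q x + m))"
    using m integrable_Q_iw iw_nonneg by (intro Q.expectation_sq_div_add_ge) auto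
  also have "\<dots> = (\<integral>z. p z * (iw p q z / (iw p q z + m)) \<partial>M)"
    by (simp add: integral_Q p_eq_q_mult_iw power2_eq_square mult.assoc
        cong: Bochner_Integration.integral_cong)
  also have "\<dots> \<le> epsN_avg M p q k"
    unfolding epsN_avg_eq_integral
  proof (intro integral_mono integrable_p_mult_epsN)
    have "0 \<le> iw p q z / (iw p q z + m) \<and> iw p q z / (iw p q z + m) \<le> 1" if "z \<in> space M" for z
      using m iw_nonneg[OF that] by (auto simp: divide_le_eq_1)
    then show "integrable M (\<lambda>z. p z * (iw p q z / (iw p q z + m)))"
      by (intro integrable_p_mult) auto
    show "p z * (iw p q z / (iw p q z + m)) \<le> p z * epsN M p q k z" if "z \<in> space M" for z
    proof (cases "0 < p z")
      case True
      then show ?thesis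
        using epsN_ge[OF assms that] by (simp add: m_def mult_left_mono del: times_divide_eq_right)
    next
      case False
      then show ?thesis using p_nonneg[OF that] by simp
    qed
  qed
  finally show ?thesis .
qed

lemma epsL_ge:
  assumes "1 \<le> lam" "z \<in> space M" "0 < p z"
  defines "n \<equiv> real (nat \<lfloor>lam\<rfloor>)" and "w \<equiv> iw p q z"
  shows "w * (w + 2 * n - lam) / ((w + n) * (w + n - 1)) \<le> epsL M p q lam z"
proof -
  have n: "1 \<le> n" "n \<le> lam" "lam < n + 1"
    using nat_floor_bounds[OF assms(1)] by (simp_all add: n_def)
  have "w * (w + 2 * n - lam) / ((w + n) * (w + n - 1))
      = (n + 1 - lam) * (w / (w + (n - 1))) + (1 - (n + 1 - lam)) * (w / (w + n))"
    using interpolate_div_add[OF iw_pos[OF assms(2,3)] n(1)] by (simp add: w_def)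
  also have "\<dots> \<le> epsL M p q lam z"
    unfolding epsL_def Let_def n_def w_def
    using n epsN_ge[OF _ assms(2,3), of "nat \<lfloor>lam\<rfloor>"]
      epsN_ge[OF _ assms(2,3), of "nat \<lfloor>lam\<rfloor> + 1"]
    by (intro convex_combination_mono) (auto simp: n_def)
  finally show ?thesis .
qed

lemma epsL_le:
  assumes "1 \<le> lam" "z \<in> space M" "0 < p z"
  shows "epsL M p q lam z \<le> 2 * iw_sup / (2 * iw_sup + lam - 1)"
  unfolding epsL_def Let_def
  using assms iw_sup_pos by (intro floor_interpolation_le_of_quadratic_bound epsN_le) auto

lemma epsL_avg_le:
  assumes "1 \<le> lam"
  shows "epsL_avg M p q lam \<le> 2 * iw_sup / (2 * iw_sup + lam - 1)"
  unfolding epsL_avg_def Let_def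
  using assms iw_sup_pos
  by (intro floor_interpolation_le_of_quadratic_bound epsN_avg_le epsN_le) auto

lemma blam_le_epsL_avg:
  assumes "1 \<le> lam"
  shows "blam lam \<le> epsL_avg M p q lam"
  unfolding blam_eq_interpolation[OF assms] epsL_avg_def Let_def
  using nat_floor_bounds[OF assms] epsN_avg_ge[of "nat \<lfloor>lam\<rfloor>"]
    epsN_avg_ge[of "nat \<lfloor>lam\<rfloor> + 1"]
  by (intro convex_combination_mono) (auto simp: add.commute)

end

theorem lemma8p1:
  fixes M :: "'a measure" and p q :: "'a \<Rightarrow> real" and lam :: real and z1 :: 'a
  assumes "sigma_finite_measure M"
    and "p \<in> borel_measurable M" and "q \<in> borel_measurable M"
    and "\<And>x. x \<in> space M \<Longrightarrow> p x \<ge> 0"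
    and "\<And>x. x \<in> space M \<Longrightarrow> q x \<ge> 0"
    and "(\<integral>\<^sup>+x. ennreal (p x) \<partial>M) = 1"
    and "(\<integral>\<^sup>+x. ennreal (q x) \<partial>M) = 1"
    and "\<And>x. x \<in> space M \<Longrightarrow> p x > 0 \<Longrightarrow> q x > 0"
    and "bdd_above (iw p q ` space M)"
    and "lam \<ge> 1"
    and "z1 \<in> space M" and "p z1 > 0"
  shows
   "(let wh = (SUP x\<in>space M. iw p q x); w1 = iw p q z1; n = real (nat \<lfloor>lam\<rfloor>) in
      0 < w1 * (w1 + 2 * n - lam) / ((w1 + n) * (w1 + n - 1))
    \<and> w1 * (w1 + 2 * n - lam) / ((w1 + n) * (w1 + n - 1)) \<le> epsL M p q lam z1
    \<and> epsL M p q lam z1 \<le> 2 * wh / (2 * wh + lam - 1)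
    \<and> 1 / lam \<le> blam lam
    \<and> blam lam \<le> epsL_avg M p q lam
    \<and> epsL_avg M p q lam \<le> 2 * wh / (2 * wh + lam - 1)
    \<and> (lam > 1 \<longrightarrow>
          1 < (n\<^sup>2 + 3 * n - lam + 1) / (n\<^sup>2 - n + lam - 1)
        \<and> (n\<^sup>2 + 3 * n - lam + 1) / (n\<^sup>2 - n + lam - 1)
            \<le> (1 + epsL_avg M p q lam) / (1 - epsL_avg M p q lam)
        \<and> (1 + epsL_avg M p q lam) / (1 - epsL_avg M p q lam)
            \<le> (4 * wh + lam - 1) / (lam - 1)))"
proof -
  interpret importance_sampling M p q
    using assms(2-9) by unfold_locales
  have avg: "blam lam \<le> epsL_avg M p q lam"
    "epsL_avg M p q lam \<le> 2 * iw_sup / (2 * iw_sup + lam - 1)"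
    using blam_le_epsL_avg[OF assms(10)] epsL_avg_le[OF assms(10)] by auto
  show ?thesis
    unfolding Let_def
    using interpolate_div_add_pos[OF iw_pos[OF assms(11,12)] assms(10)]
      epsL_ge[OF assms(10-12)] epsL_le[OF assms(10-12)] inverse_le_blam[OF assms(10)] avg
      ratio_bounds[OF iw_sup_pos _ avg]
    by auto
qed

end
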